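(* Let $T$ be a finite tree rooted at a fixed non-leaf vertex $r$ and let $k\geq 1$. Define the graphs $I'$ and $I_0,\ldots,I_{k-1}$ on vertex set $V(T)$ as follows: distinct $u,v$ are adjacent in $I'$ iff $f'(u)\cap f'(v)\neq\emptyset$, where $f'(u)=[d_T(r,u),d_T(r,u)+k]$; and distinct $u,v$ are adjacent in $I_i$ iff $f_i(u)\cap f_i(v)\neq\emptyset$, where $f_i(u)=[s(p^i(u)),\,t(p^{k-1-i}(u))]$. If $u,v$ are distinct vertices with $(u,v)\notin E(T^k)$, then either $(u,v)\notin E(I')$ or there exists $i\in\{0,\ldots,k-1\}$ with $(u,v)\notin E(I_i)$.
   Context: $d_T$ is the distance in $T$, and $T^k$ is the graph on $V(T)$ in which distinct $u,v$ are adjacent iff $d_T(u,v)\leq k$. For vertices $u,v$, $u\preceq v$ ($u$ is an ancestor of $v$) means that $u$ lies on the unique path in $T$ from $r$ to $v$. For $u\neq r$, $p(u)$ is the neighbour of $u$ on the path from $u$ to $r$, and $p(r)=r$; $p^0(u)=u$, $p^i(u)=p(p^{i-1}(u))$ for $i\geq1$. Let $l_1,\ldots,l_m$ be the leaves (degree-1 vertices) of $T$ in the order in which they appear in some depth-first traversal of $T$ starting from $r$; for a vertex $u$, $L(u)=\{i: u\preceq l_i\}$, $s(u)=\min L(u)$, $t(u)=\max L(u)$. *)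

theory Defs
  imports Main
begin

definition is_walk :: "('a \<Rightarrow> 'a \<Rightarrow> bool) \<Rightarrow> 'a list \<Rightarrow> bool" where
  "is_walk E xs \<longleftrightarrow> xs \<noteq> [] \<and> (\<forall>j. Suc j < length xs \<longrightarrow> E (xs ! j) (xs ! Suc j))"

definition is_path :: "('a \<Rightarrow> 'a \<Rightarrow> bool) \<Rightarrow> 'a \<Rightarrow> 'a \<Rightarrow> 'a list \<Rightarrow> bool" where
  "is_path E u v xs \<longleftrightarrow> is_walk E xs \<and> distinct xs \<and> hd xs = u \<and> last xs = v"

definition is_tree :: "'a set \<Rightarrow> ('a \<Rightarrow> 'a \<Rightarrow> bool) \<Rightarrow> bool" where
  "is_tree V E \<longleftrightarrow> finite V \<and> V \<noteq> {}
     \<and> (\<forall>u v. E u v \<longrightarrow> u \<in> V \<and> v \<in> V)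
     \<and> (\<forall>u v. E u v \<longrightarrow> E v u) \<and> (\<forall>u. \<not> E u u)
     \<and> (\<forall>u\<in>V. \<forall>v\<in>V. \<exists>xs. is_path E u v xs)
     \<and> (\<forall>xs. \<not> (is_walk E xs \<and> distinct xs \<and> length xs \<ge> 3 \<and> E (last xs) (hd xs)))"

definition tdist :: "('a \<Rightarrow> 'a \<Rightarrow> bool) \<Rightarrow> 'a \<Rightarrow> 'a \<Rightarrow> nat" where
  "tdist E u v = (LEAST n. \<exists>xs. is_walk E xs \<and> hd xs = u \<and> last xs = v \<and> length xs = Suc n)"

definition anc :: "('a \<Rightarrow> 'a \<Rightarrow> bool) \<Rightarrow> 'a \<Rightarrow> 'a \<Rightarrow> 'a \<Rightarrow> bool" where
  "anc E r u v \<longleftrightarrow> (\<exists>xs. is_path E r v xs \<and> u \<in> set xs)"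

definition par :: "('a \<Rightarrow> 'a \<Rightarrow> bool) \<Rightarrow> 'a \<Rightarrow> 'a \<Rightarrow> 'a" where
  "par E r u = (if u = r then r else (THE w. E u w \<and> (\<exists>xs. is_path E u r xs \<and> w \<in> set xs)))"

definition is_leaf :: "'a set \<Rightarrow> ('a \<Rightarrow> 'a \<Rightarrow> bool) \<Rightarrow> 'a \<Rightarrow> bool" where
  "is_leaf V E u \<longleftrightarrow> card {v \<in> V. E u v} = 1"

definition children :: "'a set \<Rightarrow> ('a \<Rightarrow> 'a \<Rightarrow> bool) \<Rightarrow> 'a \<Rightarrow> 'a \<Rightarrow> 'a set" where
  "children V E r u = {v \<in> V. v \<noteq> r \<and> par E r v = u}"

text \<open>dfs_seq V E r u xs: xs is the sequence of vertices of the subtree rooted at u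
  in the order they are first visited by some depth-first traversal starting at u
  (children may be visited in any order).\<close>
inductive dfs_seq :: "'a set \<Rightarrow> ('a \<Rightarrow> 'a \<Rightarrow> bool) \<Rightarrow> 'a \<Rightarrow> 'a \<Rightarrow> 'a list \<Rightarrow> bool"
  for V E r where
  "distinct cs \<Longrightarrow> set cs = children V E r u \<Longrightarrow> list_all2 (dfs_seq V E r) cs xss
   \<Longrightarrow> dfs_seq V E r u (u # concat xss)"

text \<open>Leaves l_0, ..., l_{m-1} listed in the DFS order xs (0-based indexing).\<close>
definition leaf_list :: "'a set \<Rightarrow> ('a \<Rightarrow> 'a \<Rightarrow> bool) \<Rightarrow> 'a list \<Rightarrow> 'a list" where
  "leaf_list V E xs = filter (is_leaf V E) xs"

definition Lset :: "'a set \<Rightarrow> ('a \<Rightarrow> 'a \<Rightarrow> bool) \<Rightarrow> 'a \<Rightarrow> 'a list \<Rightarrow> 'a \<Rightarrow> nat set" where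
  "Lset V E r xs u = {i. i < length (leaf_list V E xs) \<and> anc E r u (leaf_list V E xs ! i)}"

definition sidx :: "'a set \<Rightarrow> ('a \<Rightarrow> 'a \<Rightarrow> bool) \<Rightarrow> 'a \<Rightarrow> 'a list \<Rightarrow> 'a \<Rightarrow> nat" where
  "sidx V E r xs u = Min (Lset V E r xs u)"

definition tidx :: "'a set \<Rightarrow> ('a \<Rightarrow> 'a \<Rightarrow> bool) \<Rightarrow> 'a \<Rightarrow> 'a list \<Rightarrow> 'a \<Rightarrow> nat" where
  "tidx V E r xs u = Max (Lset V E r xs u)"

definition fprime :: "('a \<Rightarrow> 'a \<Rightarrow> bool) \<Rightarrow> 'a \<Rightarrow> nat \<Rightarrow> 'a \<Rightarrow> nat set" where
  "fprime E r k u = {tdist E r u .. tdist E r u + k}"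

definition fi :: "'a set \<Rightarrow> ('a \<Rightarrow> 'a \<Rightarrow> bool) \<Rightarrow> 'a \<Rightarrow> 'a list \<Rightarrow> nat \<Rightarrow> nat \<Rightarrow> 'a \<Rightarrow> nat set" where
  "fi V E r xs k i u = {sidx V E r xs ((par E r ^^ i) u) .. tidx V E r xs ((par E r ^^ (k - 1 - i)) u)}"

end

theory Submission
  imports Defs "HOL-Library.Disjoint_Sets"
begin

text \<open>Let \<open>w\<close> be the lowest common ancestor of \<open>u\<close> and \<open>v\<close>, at distances \<open>a\<close> and \<open>b\<close> from them,
  so that \<open>a + b \<ge> d\<^sub>T(u,v) > k\<close>. If \<open>a = 0\<close> or \<open>b = 0\<close>, the depths of \<open>u\<close> and \<open>v\<close> differ by more
  than \<open>k\<close> and \<open>f'(u)\<close>, \<open>f'(v)\<close> are disjoint. Otherwise the children of \<open>w\<close> towards \<open>u\<close> and \<open>v\<close>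
  are distinct siblings, and a depth-first traversal lists all vertices below one of them, say
  the one towards \<open>u\<close>, before all vertices below the other. For \<open>i = k - min(a,k)\<close> the vertex
  \<open>p\<^bsup>k-1-i\<^esup>(u)\<close> lies in the first of these subtrees and \<open>p\<^sup>i(v)\<close> in the second, hence
  \<open>t(p\<^bsup>k-1-i\<^esup>(u)) < s(p\<^sup>i(v))\<close>: the interval \<open>f\<^sub>i(u)\<close> ends before \<open>f\<^sub>i(v)\<close> starts.\<close>

section \<open>Walks\<close>

lemma is_walk_Nil [simp]: "\<not> is_walk E []"
  by (simp add: is_walk_def)

lemma is_walk_singleton [simp]: "is_walk E [x]"
  by (simp add: is_walk_def)

lemma is_walk_Cons_Cons [simp]: "is_walk E (x # y # zs) \<longleftrightarrow> E x y \<and> is_walk E (y # zs)"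
  unfolding is_walk_def by (auto simp: nth_Cons split: nat.splits)

lemma is_walk_Cons: "ys \<noteq> [] \<Longrightarrow> is_walk E (x # ys) \<longleftrightarrow> E x (hd ys) \<and> is_walk E ys"
  by (cases ys) auto

lemma is_walk_append:
  "xs \<noteq> [] \<Longrightarrow> ys \<noteq> [] \<Longrightarrow>
   is_walk E (xs @ ys) \<longleftrightarrow> is_walk E xs \<and> is_walk E ys \<and> E (last xs) (hd ys)"
  by (induction xs) (auto simp: is_walk_Cons)

lemma is_walk_appendD1: "xs \<noteq> [] \<Longrightarrow> is_walk E (xs @ ys) \<Longrightarrow> is_walk E xs"
  using is_walk_append[of xs ys E] by (cases "ys = []") auto

lemma is_walk_appendD2: "ys \<noteq> [] \<Longrightarrow> is_walk E (xs @ ys) \<Longrightarrow> is_walk E ys"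
  using is_walk_append[of xs ys E] by (cases "xs = []") auto

lemma is_walk_rev:
  assumes "\<And>x y. E x y \<Longrightarrow> E y x"
  shows "is_walk E (rev xs) \<longleftrightarrow> is_walk E xs"
proof (induction xs)
  case (Cons a xs)
  then show ?case
    using assms is_walk_append[of "rev xs" "[a]" E]
    by (cases "xs = []") (auto simp: is_walk_Cons hd_rev last_rev)
qed simp

lemma is_walk_glue: "is_walk E (xs @ [y]) \<Longrightarrow> is_walk E (y # zs) \<Longrightarrow> is_walk E (xs @ y # zs)"
  using is_walk_append[of "xs @ [y]" zs E] by (cases "zs = []") (auto simp: is_walk_Cons)

lemma walk_shortens_to_path:
  "is_walk E xs \<Longrightarrow> \<exists>ys. is_path E (hd xs) (last xs) ys \<and> length ys \<le> length xs"
proof (induction "length xs" arbitrary: xs rule: less_induct)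
  case less
  show ?case
  proof (cases "distinct xs")
    case True
    then show ?thesis using less.prems by (auto simp: is_path_def)
  next
    case False
    then obtain a b c y where xs: "xs = a @ [y] @ b @ [y] @ c"
      using not_distinct_decomp by blast
    have "is_walk E (a @ [y])"
      using is_walk_appendD1[where xs="a @ [y]" and ys="b @ [y] @ c"] less.prems xs by simp
    moreover have "is_walk E (y # c)"
      using is_walk_appendD2[where ys="y # c" and xs="a @ [y] @ b"] less.prems xs by simp
    ultimately have "is_walk E (a @ y # c)"
      by (rule is_walk_glue)
    moreover have "length (a @ y # c) < length xs"
      using xs by simp
    ultimately obtain ys where "is_path E (hd (a @ y # c)) (last (a @ y # c)) ys"
      "length ys \<le> length (a @ y # c)"
      using less.hyps by blast
    moreover have "hd (a @ y # c) = hd xs" "last (a @ y # c) = last xs"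
      using xs by (cases a; cases c; simp)+
    ultimately show ?thesis
      using xs by fastforce
  qed
qed

section \<open>One set preceding another in a list\<close>

definition precedes :: "'a set \<Rightarrow> 'a set \<Rightarrow> 'a list \<Rightarrow> bool" where
  "precedes A B xs \<longleftrightarrow> (\<exists>ys zs. xs = ys @ zs \<and> set ys \<inter> B = {} \<and> set zs \<inter> A = {})"

lemma precedes_mono: "precedes A B xs \<Longrightarrow> A' \<subseteq> A \<Longrightarrow> B' \<subseteq> B \<Longrightarrow> precedes A' B' xs"
  unfolding precedes_def by blast

lemma precedes_Cons:
  assumes "precedes A B xs" "x \<notin> B"
  shows "precedes A B (x # xs)"
proof -
  obtain ys zs where "xs = ys @ zs" "set ys \<inter> B = {}" "set zs \<inter> A = {}"
    using assms(1) unfolding precedes_def by blast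
  then show ?thesis
    using assms(2) unfolding precedes_def by (intro exI[of _ "x # ys"] exI[of _ zs]) auto
qed

lemma precedes_filter:
  assumes "precedes A B xs"
  shows "precedes A B (filter P xs)"
proof -
  obtain ys zs where "xs = ys @ zs" "set ys \<inter> B = {}" "set zs \<inter> A = {}"
    using assms unfolding precedes_def by blast
  then show ?thesis
    unfolding precedes_def by (intro exI[of _ "filter P ys"] exI[of _ "filter P zs"]) auto
qed

lemma precedes_append_append:
  assumes "precedes A B xs" "set ys \<inter> (A \<union> B) = {}" "set zs \<inter> (A \<union> B) = {}"
  shows "precedes A B (ys @ xs @ zs)"
proof -
  obtain xs1 xs2 where "xs = xs1 @ xs2" "set xs1 \<inter> B = {}" "set xs2 \<inter> A = {}"
    using assms(1) unfolding precedes_def by blast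
  then show ?thesis
    using assms(2,3) unfolding precedes_def
    by (intro exI[of _ "ys @ xs1"] exI[of _ "xs2 @ zs"]) auto
qed

lemma precedes_nth_less:
  assumes "precedes A B xs" "i < length xs" "xs ! i \<in> A" "xs ! j \<in> B"
  shows "i < j"
proof -
  obtain ys zs where xs: "xs = ys @ zs" "set ys \<inter> B = {}" "set zs \<inter> A = {}"
    using assms(1) unfolding precedes_def by blast
  have "i < length ys"
  proof (rule ccontr)
    assume "\<not> i < length ys"
    then have "xs ! i \<in> set zs"
      using xs(1) assms(2) by (simp add: nth_append)
    then show False
      using xs(3) assms(3) by blast
  qed
  moreover have "\<not> j < length ys"
  proof
    assume "j < length ys"
    then have "xs ! j \<in> set ys"
      using xs(1) by (simp add: nth_append)
    then show False
      using xs(2) assms(4) by blast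
  qed
  ultimately show ?thesis by simp
qed

lemma mem_set_concat_take:
  assumes "x \<in> set (concat (take j xss))"
  shows "\<exists>m<j. m < length xss \<and> x \<in> set (xss ! m)"
proof -
  obtain m where "m < length (take j xss)" "x \<in> set (take j xss ! m)"
    using assms by (auto simp: in_set_conv_nth[of _ "take j xss"])
  then show ?thesis by auto
qed

lemma mem_set_concat_drop:
  assumes "x \<in> set (concat (drop j xss))"
  shows "\<exists>m\<ge>j. m < length xss \<and> x \<in> set (xss ! m)"
proof -
  obtain m where "m < length (drop j xss)" "x \<in> set (drop j xss ! m)"
    using assms by (auto simp: in_set_conv_nth[of _ "drop j xss"])
  then show ?thesis
    by (intro exI[of _ "j + m"]) auto
qed

lemma set_concat_take_disjoint:
  assumes "j \<le> n" "n < length xss"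
    and disjoint: "disjoint_family_on (\<lambda>i. set (xss ! i)) {..<length xss}"
  shows "set (concat (take j xss)) \<inter> set (xss ! n) = {}"
proof -
  have "x \<notin> set (xss ! n)" if x: "x \<in> set (concat (take j xss))" for x
  proof -
    obtain m where "m < j" "x \<in> set (xss ! m)"
      using mem_set_concat_take[OF x] by blast
    then show ?thesis
      using disjoint_family_onD[OF disjoint, of m n] assms(1,2) by auto
  qed
  then show ?thesis by blast
qed

lemma set_concat_drop_disjoint:
  assumes "n < j"
    and disjoint: "disjoint_family_on (\<lambda>i. set (xss ! i)) {..<length xss}"
  shows "set (concat (drop j xss)) \<inter> set (xss ! n) = {}"
proof -
  have "x \<notin> set (xss ! n)" if x: "x \<in> set (concat (drop j xss))" for x
  proof -
    obtain m where "j \<le> m" "m < length xss" "x \<in> set (xss ! m)"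
      using mem_set_concat_drop[OF x] by blast
    then show ?thesis
      using disjoint_family_onD[OF disjoint, of m n] assms(1) by auto
  qed
  then show ?thesis by blast
qed

lemma precedes_concat:
  assumes "i < j" "j < length xss" "A \<subseteq> set (xss ! i)" "B \<subseteq> set (xss ! j)"
    and disjoint: "disjoint_family_on (\<lambda>i. set (xss ! i)) {..<length xss}"
  shows "precedes A B (concat xss)"
  unfolding precedes_def
proof (intro exI conjI)
  show "concat xss = concat (take j xss) @ concat (drop j xss)"
    by (simp flip: concat_append)
  show "set (concat (take j xss)) \<inter> B = {}"
    using set_concat_take_disjoint[of j j xss] disjoint assms(2,4) by blast
  show "set (concat (drop j xss)) \<inter> A = {}"
    using set_concat_drop_disjoint[of i j xss] disjoint assms(1,3) by blast
qed

lemma precedes_concat_nth: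
  assumes "m < length xss" "precedes A B (xss ! m)" "A \<union> B \<subseteq> set (xss ! m)"
    and disjoint: "disjoint_family_on (\<lambda>i. set (xss ! i)) {..<length xss}"
  shows "precedes A B (concat xss)"
proof -
  have "concat xss = concat (take m xss) @ xss ! m @ concat (drop (Suc m) xss)"
    using id_take_nth_drop[OF assms(1)] by (metis concat.simps(2) concat_append)
  moreover have "set (concat (take m xss)) \<inter> (A \<union> B) = {}"
    using set_concat_take_disjoint[of m m xss] disjoint assms(1,3) by blast
  moreover have "set (concat (drop (Suc m) xss)) \<inter> (A \<union> B) = {}"
    using set_concat_drop_disjoint[of m "Suc m" xss] disjoint assms(3) by blast
  ultimately show ?thesis
    using precedes_append_append[OF assms(2)] by metis
qed

section \<open>Paths, parents and depth in a rooted tree\<close>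

locale rooted_tree =
  fixes V :: "'a set" and E :: "'a \<Rightarrow> 'a \<Rightarrow> bool" and r :: 'a
  assumes tree: "is_tree V E" and root_in_V: "r \<in> V"
begin

lemma finite_V: "finite V"
  using tree by (simp add: is_tree_def)

lemma edge_in_V: "E u v \<Longrightarrow> u \<in> V \<and> v \<in> V"
  using tree by (simp add: is_tree_def)

lemma edge_sym: "E u v \<Longrightarrow> E v u"
  using tree by (simp add: is_tree_def)

lemma edge_irrefl: "\<not> E u u"
  using tree by (simp add: is_tree_def)

lemma connected: "u \<in> V \<Longrightarrow> v \<in> V \<Longrightarrow> \<exists>xs. is_path E u v xs"
  using tree by (simp add: is_tree_def)

lemma acyclic:
  "is_walk E xs \<Longrightarrow> distinct xs \<Longrightarrow> length xs \<ge> 3 \<Longrightarrow> E (last xs) (hd xs) \<Longrightarrow> False"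
  using tree by (simp add: is_tree_def)

lemma is_path_rev: "is_path E u v p \<Longrightarrow> is_path E v u (rev p)"
  using is_walk_rev[of E p] edge_sym by (auto simp: is_path_def hd_rev last_rev)

lemma path_no_chord:
  assumes "is_walk E (x # ys)" "distinct (x # ys)" "w \<in> set ys" "w \<noteq> hd ys" "E x w"
  shows False
proof -
  obtain ys1 ys2 where ys: "ys = ys1 @ w # ys2"
    using assms(3) by (meson split_list)
  have "ys1 \<noteq> []"
    using ys assms(4) by auto
  have "is_walk E (x # ys1 @ [w])"
    using is_walk_appendD1[where xs="x # ys1 @ [w]" and ys=ys2] assms(1) ys by simp
  then show False
    using acyclic[of "x # ys1 @ [w]"] assms(2,5) ys \<open>ys1 \<noteq> []\<close> edge_sym by (auto simp: Suc_le_eq)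
qed

lemma no_internally_disjoint_paths:
  assumes "is_walk E (u # ps @ [z])" "is_walk E (u # qs @ [z])"
    and "distinct (u # ps @ [z])" "distinct (u # qs @ [z])"
    and "set ps \<inter> set qs = {}" and "ps \<noteq> [] \<or> qs \<noteq> []"
  shows False
proof -
  define cyc where "cyc = (u # ps @ [z]) @ rev qs"
  have "is_walk E (z # rev qs)"
    using assms(2) is_walk_rev[of E "qs @ [z]"] is_walk_appendD2[where ys="qs @ [z]" and xs="[u]"] edge_sym
    by auto
  then have "is_walk E cyc"
    using assms(1) is_walk_glue[where xs="u # ps" and y=z and zs="rev qs"] by (simp add: cyc_def)
  moreover have "distinct cyc"
    using assms(3-5) by (auto simp: cyc_def)
  moreover have "length cyc \<ge> 3"
    using assms(6) by (auto simp: cyc_def Suc_le_eq)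
  moreover have "E (last cyc) (hd cyc)"
    using assms(2) edge_sym by (cases qs) (auto simp: cyc_def last_rev)
  ultimately show False
    by (rule acyclic)
qed

lemma is_path_self: "is_path E u u p \<Longrightarrow> p = [u]"
  unfolding is_path_def by (cases p) (auto dest: last_in_set split: if_splits)

lemma paths_agree_after_start:
  assumes "is_path E u v (u # p)" "is_path E u v (u # q)" "p \<noteq> []" "q \<noteq> []"
  shows "hd p = hd q"
proof (rule ccontr)
  assume diverge: "hd p \<noteq> hd q"
  have "v \<in> set p" "v \<in> set q"
    using assms by (auto simp: is_path_def) (metis last_in_set)+
  then obtain ps z ps' where p: "p = ps @ z # ps'" "z \<in> set q" "\<forall>y\<in>set ps. y \<notin> set q"
    using split_list_first_prop[of p "\<lambda>y. y \<in> set q"] by blast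
  obtain qs qs' where q: "q = qs @ z # qs'"
    using p(2) by (meson split_list)
  show False
  proof (rule no_internally_disjoint_paths)
    show "is_walk E (u # ps @ [z])"
      using assms(1) p is_walk_appendD1[where xs="u # ps @ [z]" and ys=ps'] by (simp add: is_path_def)
    show "is_walk E (u # qs @ [z])"
      using assms(2) q is_walk_appendD1[where xs="u # qs @ [z]" and ys=qs'] by (simp add: is_path_def)
    show "distinct (u # ps @ [z])" "distinct (u # qs @ [z])"
      using assms(1,2) p q by (auto simp: is_path_def)
    show "set ps \<inter> set qs = {}" "ps \<noteq> [] \<or> qs \<noteq> []"
      using p q diverge by auto
  qed
qed

lemma path_unique: "is_path E u v p \<Longrightarrow> is_path E u v q \<Longrightarrow> p = q"
proof (induction "length p" arbitrary: p q u rule: less_induct)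
  case less
  obtain p' where p: "p = u # p'"
    using less.prems by (cases p) (auto simp: is_path_def)
  obtain q' where q: "q = u # q'"
    using less.prems by (cases q) (auto simp: is_path_def)
  show ?case
  proof (cases "p' = [] \<or> q' = []")
    case True
    then have "u = v"
      using less.prems p q by (auto simp: is_path_def)
    then show ?thesis
      using less.prems is_path_self by blast
  next
    case False
    then have "hd p' = hd q'"
      using paths_agree_after_start less.prems p q by blast
    moreover have "is_path E (hd p') v p'" "is_path E (hd q') v q'"
      using less.prems p q False by (auto simp: is_path_def is_walk_Cons)
    ultimately show ?thesis
      using less.hyps[of p'] p q by auto
  qed
qed

definition tree_path :: "'a \<Rightarrow> 'a \<Rightarrow> 'a list" where
  "tree_path x y = (THE p. is_path E x y p)"

lemma tree_path_eq: "is_path E x y p \<Longrightarrow> tree_path x y = p"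
  unfolding tree_path_def using path_unique by blast

lemma is_path_tree_path: "x \<in> V \<Longrightarrow> y \<in> V \<Longrightarrow> is_path E x y (tree_path x y)"
  using connected tree_path_eq by metis

lemma tree_path_refl: "tree_path x x = [x]"
  by (rule tree_path_eq) (simp add: is_path_def)

lemma tree_path_not_Nil: "x \<in> V \<Longrightarrow> y \<in> V \<Longrightarrow> tree_path x y \<noteq> []"
  using is_path_tree_path[of x y] by (auto simp: is_path_def)

lemma tree_path_commute: "x \<in> V \<Longrightarrow> y \<in> V \<Longrightarrow> tree_path y x = rev (tree_path x y)"
  using is_path_tree_path is_path_rev tree_path_eq by metis

lemma tdist_le:
  assumes "is_walk E ws" "hd ws = x" "last ws = y" "length ws = Suc n"
  shows "tdist E x y \<le> n"
  unfolding tdist_def by (rule Least_le) (use assms in blast)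

lemma tdist_tree_path:
  assumes "x \<in> V" "y \<in> V"
  shows "tdist E x y = length (tree_path x y) - 1"
proof (rule antisym)
  show "tdist E x y \<le> length (tree_path x y) - 1"
    using is_path_tree_path[OF assms] tree_path_not_Nil[OF assms]
    by (intro tdist_le[of "tree_path x y"]) (auto simp: is_path_def)
next
  have "\<exists>n ws. is_walk E ws \<and> hd ws = x \<and> last ws = y \<and> length ws = Suc n"
    using is_path_tree_path[OF assms] tree_path_not_Nil[OF assms]
    by (intro exI[of _ "length (tree_path x y) - 1"] exI[of _ "tree_path x y"]) (auto simp: is_path_def)
  then have "\<exists>ws. is_walk E ws \<and> hd ws = x \<and> last ws = y \<and> length ws = Suc (tdist E x y)"
    unfolding tdist_def by (rule LeastI_ex)
  then obtain ws where ws: "is_walk E ws" "hd ws = x" "last ws = y" "length ws = Suc (tdist E x y)"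
    by blast
  then show "length (tree_path x y) - 1 \<le> tdist E x y"
    using walk_shortens_to_path[OF ws(1)] tree_path_eq by fastforce
qed

lemma tdist_commute: "x \<in> V \<Longrightarrow> y \<in> V \<Longrightarrow> tdist E y x = tdist E x y"
  using tdist_tree_path tree_path_commute[of x y] by simp

lemma tdist_triangle:
  assumes "x \<in> V" "y \<in> V" "z \<in> V"
  shows "tdist E x z \<le> tdist E x y + tdist E y z"
proof -
  define ps where "ps = butlast (tree_path x y)"
  define qs where "qs = tl (tree_path y z)"
  have "tree_path x y = ps @ [y]"
    using is_path_tree_path[OF assms(1,2)] tree_path_not_Nil[OF assms(1,2)]
    unfolding ps_def is_path_def by (metis append_butlast_last_id)
  then have P: "is_path E x y (ps @ [y])"
    using is_path_tree_path[OF assms(1,2)] by simp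
  have "tree_path y z = y # qs"
    using is_path_tree_path[OF assms(2,3)] tree_path_not_Nil[OF assms(2,3)]
    unfolding qs_def is_path_def by (metis list.collapse)
  then have Q: "is_path E y z (y # qs)"
    using is_path_tree_path[OF assms(2,3)] by simp
  have "is_walk E (ps @ [y])" "is_walk E (y # qs)"
    using P Q by (simp_all add: is_path_def)
  then have "is_walk E (ps @ y # qs)"
    by (rule is_walk_glue)
  moreover have "hd (ps @ y # qs) = x"
    using P by (cases ps) (simp_all add: is_path_def)
  moreover have "last (ps @ y # qs) = z"
    using Q by (simp add: is_path_def)
  moreover have "tdist E x y = length ps" "tdist E y z = length qs"
    using tdist_tree_path[OF assms(1,2)] tdist_tree_path[OF assms(2,3)]
      tree_path_eq[OF P] tree_path_eq[OF Q] by simp_all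
  ultimately show ?thesis
    using tdist_le[of "ps @ y # qs" x z "length ps + length qs"] by simp
qed

abbreviation parent :: "'a \<Rightarrow> 'a" where
  "parent \<equiv> par E r"

abbreviation depth :: "'a \<Rightarrow> nat" where
  "depth \<equiv> tdist E r"

lemma tree_path_to_root_Cons:
  assumes "x \<in> V" "x \<noteq> r"
  shows "tree_path x r = x # tree_path (parent x) r" "E x (parent x)" "parent x \<in> V"
proof -
  have P: "is_path E x r (tree_path x r)"
    using is_path_tree_path assms root_in_V by blast
  then obtain ys where xr: "tree_path x r = x # ys"
    by (cases "tree_path x r") (auto simp: is_path_def)
  have "ys \<noteq> []"
    using P xr assms by (auto simp: is_path_def)
  have "E x (hd ys)"
    using P xr \<open>ys \<noteq> []\<close> by (simp add: is_path_def is_walk_Cons)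
  have "parent x = (THE w. E x w \<and> (\<exists>xs. is_path E x r xs \<and> w \<in> set xs))"
    using assms(2) by (simp add: par_def)
  also have "\<dots> = hd ys"
  proof (rule the_equality)
    show "E x (hd ys) \<and> (\<exists>xs. is_path E x r xs \<and> hd ys \<in> set xs)"
      using \<open>E x (hd ys)\<close> P xr \<open>ys \<noteq> []\<close> by auto
  next
    fix w
    assume w: "E x w \<and> (\<exists>xs. is_path E x r xs \<and> w \<in> set xs)"
    then have "w \<in> set ys"
      using tree_path_eq xr edge_irrefl by fastforce
    then show "w = hd ys"
      using path_no_chord[of x ys w] w P xr unfolding is_path_def by auto
  qed
  finally have "parent x = hd ys" .
  moreover have "is_path E (hd ys) r ys"
    using P xr \<open>ys \<noteq> []\<close> by (auto simp: is_path_def is_walk_Cons)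
  ultimately show "tree_path x r = x # tree_path (parent x) r" "E x (parent x)" "parent x \<in> V"
    using tree_path_eq xr \<open>E x (hd ys)\<close> edge_in_V by auto
qed

lemma depth_eq_length: "x \<in> V \<Longrightarrow> depth x = length (tree_path x r) - 1"
  using tdist_commute[OF _ root_in_V] tdist_tree_path[OF _ root_in_V] by simp

lemma depth_root [simp]: "depth r = 0"
  using depth_eq_length[OF root_in_V] tree_path_refl by simp

lemma depth_parent: "x \<in> V \<Longrightarrow> x \<noteq> r \<Longrightarrow> depth x = Suc (depth (parent x))"
  using depth_eq_length tree_path_to_root_Cons tree_path_not_Nil[OF _ root_in_V]
  by (metis Suc_pred' diff_Suc_1 length_Cons length_greater_0_conv)

lemma depth_eq_0_iff: "x \<in> V \<Longrightarrow> depth x = 0 \<longleftrightarrow> x = r"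
  using depth_parent by fastforce

lemma parent_root [simp]: "parent r = r"
  by (simp add: par_def)

lemma parent_in_V: "x \<in> V \<Longrightarrow> parent x \<in> V"
  using tree_path_to_root_Cons root_in_V by (cases "x = r") auto

lemma funpow_parent_in_V: "x \<in> V \<Longrightarrow> (parent ^^ n) x \<in> V"
  by (induction n) (auto simp: parent_in_V)

lemma funpow_parent_root [simp]: "(parent ^^ n) r = r"
  by (induction n) auto

lemma depth_funpow_parent: "x \<in> V \<Longrightarrow> depth ((parent ^^ n) x) = depth x - n"
proof (induction n)
  case (Suc n)
  then show ?case
    using depth_parent[OF funpow_parent_in_V[OF Suc.prems]] by (cases "(parent ^^ n) x = r") auto
qed simp

lemma funpow_parent_eq_root_iff: "x \<in> V \<Longrightarrow> (parent ^^ n) x = r \<longleftrightarrow> depth x \<le> n"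
  using depth_funpow_parent depth_eq_0_iff funpow_parent_in_V by (metis diff_is_0_eq)

lemma funpow_parent_min_depth: "x \<in> V \<Longrightarrow> (parent ^^ min j (depth x)) x = (parent ^^ j) x"
  using funpow_parent_eq_root_iff[of x j] funpow_parent_eq_root_iff[of x "depth x"]
  by (cases "j \<le> depth x") (simp_all add: min_def)

lemma set_tree_path_to_root: "x \<in> V \<Longrightarrow> set (tree_path x r) = range (\<lambda>j. (parent ^^ j) x)"
proof (induction "depth x" arbitrary: x)
  case 0
  then show ?case
    using depth_eq_0_iff by (auto simp: tree_path_refl)
next
  case (Suc n)
  then have "x \<noteq> r" by auto
  then have "set (tree_path x r) = insert x (range (\<lambda>j. (parent ^^ j) (parent x)))"
    using Suc depth_parent tree_path_to_root_Cons by simp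
  also have "\<dots> = (\<lambda>j. (parent ^^ j) x) ` insert 0 (range Suc)"
    by (simp add: image_image funpow_swap1)
  also have "insert 0 (range Suc) = (UNIV :: nat set)"
    using greaterThan_0 by auto
  finally show ?case .
qed

lemma anc_iff_funpow_parent: "x \<in> V \<Longrightarrow> anc E r y x \<longleftrightarrow> (\<exists>j. (parent ^^ j) x = y)"
proof -
  assume x: "x \<in> V"
  have "anc E r y x \<longleftrightarrow> y \<in> set (tree_path r x)"
    unfolding anc_def using tree_path_eq is_path_tree_path[OF root_in_V x] by blast
  also have "\<dots> \<longleftrightarrow> y \<in> set (tree_path x r)"
    using tree_path_commute[OF x root_in_V] by simp
  finally show ?thesis
    using set_tree_path_to_root[OF x] by auto
qed

lemma tdist_parent_le: "x \<in> V \<Longrightarrow> tdist E x (parent x) \<le> 1"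
  using tree_path_to_root_Cons[of x] tdist_le[of "[x, parent x]" x "parent x" 1]
  by (cases "x = r") (auto simp: tdist_tree_path tree_path_refl)

lemma tdist_funpow_parent_le: "x \<in> V \<Longrightarrow> tdist E x ((parent ^^ n) x) \<le> n"
proof (induction n)
  case 0
  then show ?case by (simp add: tdist_tree_path tree_path_refl)
next
  case (Suc n)
  have "tdist E x ((parent ^^ Suc n) x)
      \<le> tdist E x ((parent ^^ n) x) + tdist E ((parent ^^ n) x) (parent ((parent ^^ n) x))"
    using tdist_triangle Suc.prems funpow_parent_in_V parent_in_V by simp
  also have "\<dots> \<le> tdist E x ((parent ^^ n) x) + 1"
    using tdist_parent_le funpow_parent_in_V Suc.prems by simp
  finally show ?case
    using Suc by simp
qed

lemma tdist_le_via_common_ancestor: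
  assumes "u \<in> V" "v \<in> V" "(parent ^^ a) u = (parent ^^ b) v"
  shows "tdist E u v \<le> a + b"
proof -
  let ?w = "(parent ^^ a) u"
  have "tdist E u v \<le> tdist E u ?w + tdist E ?w v"
    using tdist_triangle assms(1,2) funpow_parent_in_V by simp
  also have "tdist E ?w v = tdist E v ((parent ^^ b) v)"
    using assms tdist_commute funpow_parent_in_V by simp
  also have "tdist E u ?w + \<dots> \<le> a + b"
    using tdist_funpow_parent_le assms(1,2) by (simp add: add_mono)
  finally show ?thesis .
qed

section \<open>Subtrees and depth-first sequences\<close>

definition subtree :: "'a \<Rightarrow> 'a set" where
  "subtree x = {y \<in> V. \<exists>j. (parent ^^ j) y = x}"

lemma subtree_subset_V: "subtree x \<subseteq> V"
  by (auto simp: subtree_def)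

lemma self_in_subtree: "x \<in> V \<Longrightarrow> x \<in> subtree x"
  unfolding subtree_def by (auto intro: exI[of _ 0])

lemma subtree_trans:
  assumes "y \<in> subtree x" "x \<in> subtree z"
  shows "y \<in> subtree z"
proof -
  obtain i j where "y \<in> V" "(parent ^^ i) y = x" "(parent ^^ j) x = z"
    using assms unfolding subtree_def by blast
  then have "(parent ^^ (j + i)) y = z"
    by (simp add: funpow_add)
  with \<open>y \<in> V\<close> show ?thesis
    unfolding subtree_def by blast
qed

lemma subtree_root: "y \<in> V \<Longrightarrow> y \<in> subtree r"
  using funpow_parent_eq_root_iff unfolding subtree_def by blast

lemma funpow_parent_in_subtree: "x \<in> V \<Longrightarrow> x \<in> subtree ((parent ^^ n) x)"
  unfolding subtree_def by blast

lemma depth_le_subtree: "y \<in> subtree x \<Longrightarrow> depth x \<le> depth y"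
  unfolding subtree_def using depth_funpow_parent by auto

lemma children_iff: "c \<in> children V E r w \<longleftrightarrow> c \<in> V \<and> c \<noteq> r \<and> parent c = w"
  by (simp add: children_def)

lemma depth_child: "c \<in> children V E r w \<Longrightarrow> depth c = Suc (depth w)"
  using depth_parent[of c] by (auto simp: children_iff)

lemma child_in_subtree: "c \<in> children V E r w \<Longrightarrow> c \<in> subtree w"
  using funpow_parent_in_subtree[of c 1] children_iff by simp

lemma not_in_subtree_child: "c \<in> children V E r w \<Longrightarrow> w \<notin> subtree c"
  using depth_le_subtree depth_child by fastforce

lemma subtrees_children_disjoint:
  assumes "c1 \<in> children V E r w" "c2 \<in> children V E r w" "c1 \<noteq> c2"
  shows "subtree c1 \<inter> subtree c2 = {}"
proof (rule ccontr)
  assume "subtree c1 \<inter> subtree c2 \<noteq> {}"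
  then obtain y i j where y: "y \<in> V" "(parent ^^ i) y = c1" "(parent ^^ j) y = c2"
    unfolding subtree_def by blast
  have "c1 \<noteq> r" "c2 \<noteq> r"
    using assms(1,2) by (simp_all add: children_iff)
  then have "i < depth y" "j < depth y"
    using funpow_parent_eq_root_iff[OF y(1), of i] funpow_parent_eq_root_iff[OF y(1), of j] y(2,3)
    by auto
  moreover have "depth c1 = depth c2"
    using depth_child[OF assms(1)] depth_child[OF assms(2)] by simp
  then have "depth y - i = depth y - j"
    using depth_funpow_parent[OF y(1)] y(2,3) by metis
  ultimately have "i = j"
    by simp
  then show False
    using y assms(3) by simp
qed

lemma funpow_parent_in_children:
  assumes "x \<in> V" "0 < a" "a \<le> depth x"
  shows "(parent ^^ (a - 1)) x \<in> children V E r ((parent ^^ a) x)"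
proof -
  have "(parent ^^ (a - 1)) x \<noteq> r"
    using assms funpow_parent_eq_root_iff by simp
  moreover have "parent ((parent ^^ (a - 1)) x) = (parent ^^ a) x"
    using assms(2) by (cases a) simp_all
  ultimately show ?thesis
    using funpow_parent_in_V[OF assms(1)] children_iff by blast
qed

lemma subtree_decomp:
  assumes "z \<in> V"
  shows "subtree z = insert z (\<Union>c\<in>children V E r z. subtree c)"
proof (intro equalityI subsetI)
  fix y
  assume "y \<in> subtree z"
  then obtain j where y: "y \<in> V" "(parent ^^ j) y = z"
    unfolding subtree_def by blast
  show "y \<in> insert z (\<Union>c\<in>children V E r z. subtree c)"
  proof (cases "y = z")
    case False
    define i where "i = min j (depth y)"
    have "(parent ^^ i) y = z"
      using funpow_parent_min_depth[OF y(1)] y(2) by (simp add: i_def)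
    moreover have "i \<noteq> 0"
      using False calculation by (intro notI) simp
    ultimately have "(parent ^^ (i - 1)) y \<in> children V E r z"
      using funpow_parent_in_children[OF y(1), of i] by (simp add: i_def)
    then show ?thesis
      using funpow_parent_in_subtree[OF y(1)] by blast
  qed simp
next
  fix y
  assume "y \<in> insert z (\<Union>c\<in>children V E r z. subtree c)"
  then show "y \<in> subtree z"
    using self_in_subtree[OF assms] subtree_trans child_in_subtree by blast
qed

lemma edge_parent:
  assumes "E y z"
  shows "parent z = y \<or> parent y = z"
proof -
  have "y \<in> V" "z \<in> V"
    using edge_in_V assms by auto
  show ?thesis
  proof (cases "z \<in> set (tree_path y r)")
    case True
    then have "y \<noteq> r"
      using tree_path_refl edge_irrefl assms by auto
    note up = tree_path_to_root_Cons[OF \<open>y \<in> V\<close> this]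
    have "z \<in> set (tree_path (parent y) r)"
      using True up(1) edge_irrefl assms by auto
    moreover have "hd (tree_path (parent y) r) = parent y"
      using is_path_tree_path[OF up(3) root_in_V] by (simp add: is_path_def)
    moreover have "is_path E y r (y # tree_path (parent y) r)"
      using is_path_tree_path[OF \<open>y \<in> V\<close> root_in_V] up(1) by simp
    ultimately have "z = parent y"
      using path_no_chord[of y "tree_path (parent y) r" z] assms by (auto simp: is_path_def)
    then show ?thesis by simp
  next
    case False
    have P: "is_path E y r (tree_path y r)"
      using is_path_tree_path \<open>y \<in> V\<close> root_in_V by blast
    then have "is_path E z r (z # tree_path y r)"
      using False assms edge_sym by (auto simp: is_path_def is_walk_Cons)
    then have zr: "tree_path z r = z # tree_path y r"
      using tree_path_eq by blast
    then have "z \<noteq> r"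
      using tree_path_refl tree_path_not_Nil[OF \<open>y \<in> V\<close> root_in_V] by auto
    then have "tree_path (parent z) r = tree_path y r"
      using tree_path_to_root_Cons[OF \<open>z \<in> V\<close>] zr by simp
    then have "parent z = y"
      using is_path_tree_path[OF parent_in_V[OF \<open>z \<in> V\<close>] root_in_V] P by (simp add: is_path_def)
    then show ?thesis by simp
  qed
qed

lemma leaf_in_subtree:
  assumes "x \<in> V" "x \<noteq> r"
  obtains l where "l \<in> subtree x" "is_leaf V E l"
proof -
  have fin: "finite (subtree x)"
    using finite_V subtree_subset_V finite_subset by blast
  obtain l where l: "l \<in> subtree x" "depth l = Max (depth ` subtree x)"
    using Max_in[of "depth ` subtree x"] fin self_in_subtree[OF assms(1)] by fastforce
  have deepest: "depth y \<le> depth l" if "y \<in> subtree x" for y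
    using fin that l(2) by simp
  have "l \<in> V" "l \<noteq> r"
    using l(1) subtree_subset_V depth_le_subtree[OF l(1)] depth_eq_0_iff assms by auto
  have "{v \<in> V. E l v} = {parent l}"
  proof (intro equalityI subsetI)
    fix v
    assume v: "v \<in> {v \<in> V. E l v}"
    show "v \<in> {parent l}"
    proof (rule ccontr)
      assume "v \<notin> {parent l}"
      then have "parent v = l"
        using edge_parent v by auto
      then have "v \<in> children V E r l"
        using v \<open>l \<noteq> r\<close> by (auto simp: children_iff)
      then show False
        using deepest[of v] depth_child child_in_subtree subtree_trans l(1) by fastforce
    qed
  qed (use tree_path_to_root_Cons[OF \<open>l \<in> V\<close> \<open>l \<noteq> r\<close>] in auto)
  then show ?thesis
    using that l(1) unfolding is_leaf_def by simp
qed

lemma set_dfs_seq: "dfs_seq V E r z ys \<Longrightarrow> z \<in> V \<Longrightarrow> set ys = subtree z"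
proof (induction rule: dfs_seq.induct)
  case (1 cs u xss)
  have "list_all2 (\<lambda>c xs. set xs = subtree c) cs xss"
    using 1(2,3) nth_mem[of _ cs] by (fastforce simp: list_all2_conv_all_nth children_iff)
  then have "set (concat xss) = (\<Union>c\<in>set cs. subtree c)"
    by (induction rule: list_all2_induct) auto
  then show ?case
    using subtree_decomp[OF 1(4)] 1(2) by simp
qed

lemma dfs_seq_children:
  assumes "distinct cs" "set cs = children V E r u" "list_all2 (dfs_seq V E r) cs xss"
  shows "length xss = length cs"
    and "\<And>i. i < length cs \<Longrightarrow> set (xss ! i) = subtree (cs ! i)"
    and "disjoint_family_on (\<lambda>i. set (xss ! i)) {..<length xss}"
proof -
  show len: "length xss = length cs"
    using list_all2_lengthD[OF assms(3)] by simp
  have child: "cs ! i \<in> children V E r u" if "i < length cs" for i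
    using assms(2) nth_mem[OF that] by blast
  show set_xss: "set (xss ! i) = subtree (cs ! i)" if "i < length cs" for i
    using list_all2_nthD[OF assms(3) that] child[OF that] set_dfs_seq by (simp add: children_iff)
  show "disjoint_family_on (\<lambda>i. set (xss ! i)) {..<length xss}"
    unfolding disjoint_family_on_def
    using subtrees_children_disjoint[OF child child] nth_eq_iff_index_eq[OF assms(1)] set_xss len
    by simp
qed

lemma dfs_seq_precedes:
  "dfs_seq V E r z ys \<Longrightarrow> z \<in> V \<Longrightarrow> w \<in> subtree z \<Longrightarrow>
   c1 \<in> children V E r w \<Longrightarrow> c2 \<in> children V E r w \<Longrightarrow> c1 \<noteq> c2 \<Longrightarrow>
   precedes (subtree c1) (subtree c2) ys \<or> precedes (subtree c2) (subtree c1) ys"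
proof (induction arbitrary: w c1 c2 rule: dfs_seq.induct)
  case (1 cs u xss)
  define n where "n = length cs"
  have "list_all2 (dfs_seq V E r) cs xss"
    using 1(3) by (rule list_all2_mono) blast
  note blocks = dfs_seq_children[OF 1(1,2) this, folded n_def]
  note len = blocks(1) and set_xss = blocks(2) and disjoint = blocks(3)
  have child: "cs ! i \<in> children V E r u" if "i < n" for i
    using 1(2) nth_mem[of i cs] that n_def by blast
  have u_notin: "u \<notin> subtree (cs ! i)" if "i < n" for i
    using not_in_subtree_child[OF child[OF that]] .
  show ?case
  proof (cases "w = u")
    case True
    obtain i j where ij: "i < n" "cs ! i = c1" "j < n" "cs ! j = c2"
      using 1(2) 1(6,7) True by (metis in_set_conv_nth n_def)
    have "precedes (subtree (cs ! i)) (subtree (cs ! j)) (u # concat xss)" if "i < j" "j < n" for i j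
    proof (rule precedes_Cons)
      show "precedes (subtree (cs ! i)) (subtree (cs ! j)) (concat xss)"
        using precedes_concat[of i j xss, OF _ _ _ _ disjoint] set_xss that len by simp
      show "u \<notin> subtree (cs ! j)"
        using u_notin that by simp
    qed
    then show ?thesis
      using ij 1(8) by (metis linorder_neqE_nat)
  next
    case False
    then obtain c where "c \<in> set cs" "w \<in> subtree c"
      using subtree_decomp[OF 1(4)] 1(2,5) by auto
    then obtain m where m: "m < n" "w \<in> subtree (cs ! m)"
      by (metis in_set_conv_nth n_def)
    have sub: "subtree c1 \<union> subtree c2 \<subseteq> set (xss ! m)"
      using m 1(6,7) child_in_subtree subtree_trans set_xss by blast
    have "precedes (subtree c1) (subtree c2) (xss ! m) \<or> precedes (subtree c2) (subtree c1) (xss ! m)"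
      using list_all2_nthD[OF 1(3), of m] m child[OF m(1)] 1(6-8) n_def
      by (simp add: children_iff)
    moreover have "u \<notin> subtree c1 \<union> subtree c2"
      using sub set_xss[OF m(1)] u_notin[OF m(1)] by blast
    moreover have "precedes A B (u # concat xss)"
      if "precedes A B (xss ! m)" "A \<union> B = subtree c1 \<union> subtree c2" for A B
    proof (rule precedes_Cons)
      show "precedes A B (concat xss)"
        using precedes_concat_nth[OF _ that(1) _ disjoint] sub m(1) len that(2) by simp
      show "u \<notin> B"
        using calculation(2) that(2) by blast
    qed
    ultimately show ?thesis
      by (metis Un_commute)
  qed
qed

lemma set_dfs_seq_root: "dfs_seq V E r r xs \<Longrightarrow> set xs = V"
  using set_dfs_seq root_in_V subtree_root subtree_subset_V by blast

section \<open>Leaf intervals\<close>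

lemma Lset_eq_subtree:
  assumes "dfs_seq V E r r xs" "y \<in> V"
  shows "Lset V E r xs y = {i. i < length (leaf_list V E xs) \<and> leaf_list V E xs ! i \<in> subtree y}"
proof -
  have "leaf_list V E xs ! i \<in> V" if "i < length (leaf_list V E xs)" for i
    using nth_mem[OF that] set_dfs_seq_root[OF assms(1)] by (auto simp: leaf_list_def)
  then show ?thesis
    unfolding Lset_def subtree_def using anc_iff_funpow_parent by auto
qed

lemma sidx_tidx_in_Lset:
  assumes "dfs_seq V E r r xs" "y \<in> V" "y \<noteq> r"
  shows "sidx V E r xs y \<in> Lset V E r xs y" "tidx V E r xs y \<in> Lset V E r xs y"
proof -
  obtain l where l: "l \<in> subtree y" "is_leaf V E l"
    using leaf_in_subtree assms(2,3) by blast
  then have "l \<in> set (leaf_list V E xs)"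
    using subtree_subset_V set_dfs_seq_root[OF assms(1)] by (auto simp: leaf_list_def)
  then have "Lset V E r xs y \<noteq> {}"
    using Lset_eq_subtree[OF assms(1,2)] l(1) by (auto simp: in_set_conv_nth)
  moreover have "finite (Lset V E r xs y)"
    unfolding Lset_def by simp
  ultimately show "sidx V E r xs y \<in> Lset V E r xs y" "tidx V E r xs y \<in> Lset V E r xs y"
    unfolding sidx_def tidx_def by (simp_all add: Min_in Max_in)
qed

lemma tidx_less_sidx:
  assumes "dfs_seq V E r r xs" "x \<in> V" "y \<in> V" "x \<noteq> r" "y \<noteq> r"
    and "precedes (subtree x) (subtree y) xs"
  shows "tidx V E r xs x < sidx V E r xs y"
proof (rule precedes_nth_less)
  show "precedes (subtree x) (subtree y) (leaf_list V E xs)"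
    unfolding leaf_list_def using assms(6) by (rule precedes_filter)
  show "tidx V E r xs x < length (leaf_list V E xs)" "leaf_list V E xs ! tidx V E r xs x \<in> subtree x"
    using sidx_tidx_in_Lset(2)[OF assms(1,2,4)] Lset_eq_subtree[OF assms(1,2)] by auto
  show "leaf_list V E xs ! sidx V E r xs y \<in> subtree y"
    using sidx_tidx_in_Lset(1)[OF assms(1,3,5)] Lset_eq_subtree[OF assms(1,3)] by auto
qed

lemma funpow_parent_neq_root_mono:
  "x \<in> V \<Longrightarrow> m \<le> n \<Longrightarrow> (parent ^^ n) x \<noteq> r \<Longrightarrow> (parent ^^ m) x \<noteq> r"
  using funpow_parent_eq_root_iff by simp

lemma subtree_funpow_parent_mono:
  assumes "x \<in> V" "m \<le> n"
  shows "subtree ((parent ^^ m) x) \<subseteq> subtree ((parent ^^ n) x)"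
proof -
  have "(parent ^^ n) x = (parent ^^ (n - m + m)) x"
    using assms(2) by simp
  also have "\<dots> = (parent ^^ (n - m)) ((parent ^^ m) x)"
    by (simp add: funpow_add)
  finally have "(parent ^^ m) x \<in> subtree ((parent ^^ n) x)"
    using funpow_parent_in_subtree[OF funpow_parent_in_V[OF assms(1)]] by metis
  then show ?thesis
    using subtree_trans by blast
qed

lemma fi_disjoint_if_precedes:
  assumes dfs: "dfs_seq V E r r xs" and "x \<in> V" "y \<in> V"
    and "0 < a" "0 < b" "k < a + b" "0 < k"
    and "(parent ^^ (a - 1)) x \<noteq> r" "(parent ^^ (b - 1)) y \<noteq> r"
    and "precedes (subtree ((parent ^^ (a - 1)) x)) (subtree ((parent ^^ (b - 1)) y)) xs"
  shows "\<exists>i<k. fi V E r xs k i x \<inter> fi V E r xs k i y = {}"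
proof -
  \<comment> \<open>then \<open>k - 1 - i < a\<close> and \<open>i < b\<close>: \<open>p\<^bsup>k-1-i\<^esup>(x)\<close> and \<open>p\<^sup>i(y)\<close> stay inside the separated subtrees\<close>
  define i where "i = k - min a k"
  have le: "k - 1 - i \<le> a - 1" "i \<le> b - 1" and "i < k"
    using assms(4-7) by (auto simp: i_def)
  have "tidx V E r xs ((parent ^^ (k - 1 - i)) x) < sidx V E r xs ((parent ^^ i) y)"
  proof (rule tidx_less_sidx[OF dfs funpow_parent_in_V funpow_parent_in_V])
    show "(parent ^^ (k - 1 - i)) x \<noteq> r" "(parent ^^ i) y \<noteq> r"
      using funpow_parent_neq_root_mono[OF assms(2) le(1) assms(8)]
        funpow_parent_neq_root_mono[OF assms(3) le(2) assms(9)] .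
    show "precedes (subtree ((parent ^^ (k - 1 - i)) x)) (subtree ((parent ^^ i) y)) xs"
      using precedes_mono[OF assms(10) subtree_funpow_parent_mono[OF assms(2) le(1)]
          subtree_funpow_parent_mono[OF assms(3) le(2)]] .
  qed (use assms(2,3) in simp_all)
  then have "fi V E r xs k i x \<inter> fi V E r xs k i y = {}"
    unfolding fi_def by auto
  with \<open>i < k\<close> show ?thesis by blast
qed

lemma lowest_common_ancestor:
  assumes "u \<in> V" "v \<in> V"
  obtains a b where "(parent ^^ a) u = (parent ^^ b) v" "a \<le> depth u" "b \<le> depth v"
    and "0 < a \<Longrightarrow> 0 < b \<Longrightarrow> (parent ^^ (a - 1)) u \<noteq> (parent ^^ (b - 1)) v"
proof -
  define P where "P i \<longleftrightarrow> (\<exists>j. (parent ^^ i) u = (parent ^^ j) v)" for i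
  have "(parent ^^ depth u) u = (parent ^^ depth v) v"
    using funpow_parent_eq_root_iff[OF assms(1), of "depth u"]
      funpow_parent_eq_root_iff[OF assms(2), of "depth v"] by simp
  then have "P (depth u)"
    unfolding P_def by blast
  define a where "a = (LEAST i. P i)"
  have "P a" "a \<le> depth u"
    unfolding a_def using \<open>P (depth u)\<close> by (auto intro: LeastI Least_le)
  then obtain j where "(parent ^^ a) u = (parent ^^ j) v"
    unfolding P_def by blast
  then have "(parent ^^ a) u = (parent ^^ min j (depth v)) v"
    using funpow_parent_min_depth[OF assms(2)] by simp
  moreover have "(parent ^^ (a - 1)) u \<noteq> (parent ^^ (b - 1)) v" if "0 < a" for b
    using not_less_Least[of "a - 1" P] that unfolding a_def P_def by auto
  ultimately show ?thesis
    using that \<open>a \<le> depth u\<close> by (meson min.cobounded2)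
qed

lemma fprime_disjoint_funpow_parent:
  assumes "v \<in> V" "b \<le> depth v" "k < b"
  shows "fprime E r k ((parent ^^ b) v) \<inter> fprime E r k v = {}"
  using depth_funpow_parent[OF assms(1), of b] assms(2,3) by (auto simp: fprime_def)

lemma fi_disjoint_at_common_ancestor:
  assumes dfs: "dfs_seq V E r r xs" and "u \<in> V" "v \<in> V"
    and "(parent ^^ a) u = (parent ^^ b) v" "a \<le> depth u" "b \<le> depth v"
    and "0 < a" "0 < b" "(parent ^^ (a - 1)) u \<noteq> (parent ^^ (b - 1)) v"
    and "0 < k" "k < a + b"
  shows "\<exists>i<k. fi V E r xs k i u \<inter> fi V E r xs k i v = {}"
proof -
  define cu where "cu = (parent ^^ (a - 1)) u"
  define cv where "cv = (parent ^^ (b - 1)) v"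
  have cu: "cu \<in> children V E r ((parent ^^ a) u)"
    using funpow_parent_in_children[OF assms(2)] assms(5,7) by (simp add: cu_def)
  have cv: "cv \<in> children V E r ((parent ^^ a) u)"
    using funpow_parent_in_children[OF assms(3)] assms(4,6,8) by (simp add: cv_def)
  have "(parent ^^ a) u \<in> subtree r"
    using subtree_root funpow_parent_in_V assms(2) by blast
  then have "precedes (subtree cu) (subtree cv) xs \<or> precedes (subtree cv) (subtree cu) xs"
    using dfs_seq_precedes[OF dfs root_in_V _ cu cv] assms(9) by (simp add: cu_def cv_def)
  moreover have "cu \<noteq> r" "cv \<noteq> r"
    using cu cv by (simp_all add: children_iff)
  moreover have "k < b + a"
    using assms(11) by simp
  ultimately show ?thesis
    using fi_disjoint_if_precedes[OF dfs assms(2,3,7,8,11,10)]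
      fi_disjoint_if_precedes[OF dfs assms(3,2,8,7) \<open>k < b + a\<close> assms(10)]
    unfolding cu_def cv_def by (metis Int_commute)
qed

end

theorem lemma9:
  fixes V :: "'a set" and E :: "'a \<Rightarrow> 'a \<Rightarrow> bool" and r :: 'a and k :: nat
    and xs :: "'a list" and u v :: 'a
  assumes "is_tree V E"
    and "r \<in> V" and "\<not> is_leaf V E r"
    and "k \<ge> 1"
    and "dfs_seq V E r r xs"
    and "u \<in> V" and "v \<in> V" and "u \<noteq> v"
    and "\<not> tdist E u v \<le> k"
  shows "fprime E r k u \<inter> fprime E r k v = {}
         \<or> (\<exists>i<k. fi V E r xs k i u \<inter> fi V E r xs k i v = {})"
proof -
  interpret rooted_tree V E r
    using assms(1,2) by unfold_locales
  obtain a b where ab: "(parent ^^ a) u = (parent ^^ b) v" "a \<le> depth u" "b \<le> depth v"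
    and siblings: "0 < a \<Longrightarrow> 0 < b \<Longrightarrow> (parent ^^ (a - 1)) u \<noteq> (parent ^^ (b - 1)) v"
    using lowest_common_ancestor[OF assms(6,7)] by blast
  have "k < a + b"
    using tdist_le_via_common_ancestor[OF assms(6,7) ab(1)] assms(9) by simp
  consider "a = 0" | "b = 0" | "0 < a" "0 < b"
    by blast
  then show ?thesis
  proof cases
    case 1
    then show ?thesis
      using fprime_disjoint_funpow_parent[OF assms(7) ab(3)] ab(1) \<open>k < a + b\<close> by simp
  next
    case 2
    then show ?thesis
      using fprime_disjoint_funpow_parent[OF assms(6) ab(2)] ab(1) \<open>k < a + b\<close>
      by (simp add: Int_commute)
  next
    case 3
    then show ?thesis
      using fi_disjoint_at_common_ancestor[OF assms(5-7) ab] siblings \<open>k < a + b\<close> assms(4) by simp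
  qed
qed

end
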